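(* For every partition $\lambda$ with $l(\lambda)=l$, $$D(\alpha)q_\lambda=\left[e_\lambda(\alpha)+2\alpha\sum_{1\le i<j\le l}\left(\frac{(\lambda_i-\lambda_j)R_{ij}}{1-R_{ij}}+\frac{2R_{ij}}{(1-R_{ij})^2}\right)\right]q_\lambda,$$ where the rational expressions in $R_{ij}$ are expanded as power series, $\frac{R}{1-R}=\sum_{k\ge1}R^k$ and $\frac{R}{(1-R)^2}=\sum_{k\ge1}kR^k$, and $e_\lambda(\alpha)=\alpha^2\sum_i\lambda_i^2+\alpha(|\lambda|-2\sum_i i\lambda_i)$.
   Context: $F=\mathbb{Q}(\alpha)$, $\Lambda_F=F[p_1,p_2,\dots]$ with $p_n$ the power sums. For a partition $\lambda$, $l(\lambda)$ is its number of parts and $z_\lambda=\prod_i i^{m_i}m_i!$. $Q_n(\alpha)=\sum_{\lambda\vdash n}\alpha^{-l(\lambda)}z_\lambda^{-1}p_\lambda$ ($Q_0=1$, $Q_n=0$ for $n<0$) and $q_\lambda=Q_{\lambda_1}Q_{\lambda_2}\cdots$. The raising operator $R_{ij}$ ($i<j$) acts by $R_{ij}^kq_\lambda=Q_{\lambda_1}\cdots Q_{\lambda_i+k}\cdots Q_{\lambda_j-k}\cdots Q_{\lambda_l}$ (only the $i$-th and $j$-th factors changed), which is $0$ when $k>\lambda_j$. The operator $$D(\alpha)=\sum_{i,j\ge1}(i+j)\alpha\,p_ip_j\frac{\partial}{\partial p_{i+j}}+\sum_{i,j\ge1}ij\alpha^2p_{i+j}\frac{\partial^2}{\partial p_i\partial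 p_j}+\alpha(\alpha-1)\sum_{k\ge1}k^2p_k\frac{\partial}{\partial p_k}.$$ *)

theory Defs
  imports "HOL-Library.Poly_Mapping" "HOL-Computational_Algebra.Polynomial"
    "HOL-Computational_Algebra.Fraction_Field"
begin

text \<open>The coefficient field F = Q(alpha): rational functions in one indeterminate over Q.\<close>
type_synonym F = "rat poly fract"

definition alpha :: F where
  "alpha = Fract [:0, 1:] 1"

text \<open>Lambda_F = F[p_1, p_2, ...]: polynomials in variables indexed by nat
  (index 0 is never used).  A monomial is a finitely supported exponent map.\<close>
type_synonym sym = "(nat \<Rightarrow>\<^sub>0 nat) \<Rightarrow>\<^sub>0 F"

definition const :: "F \<Rightarrow> sym" where
  "const c = Poly_Mapping.single 0 c"

definition pvar :: "nat \<Rightarrow> sym" where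
  "pvar n = Poly_Mapping.single (Poly_Mapping.single n 1) 1"

definition dp :: "nat \<Rightarrow> sym \<Rightarrow> sym" where
  "dp k f = Abs_poly_mapping
     (\<lambda>m::nat \<Rightarrow>\<^sub>0 nat. of_nat (Poly_Mapping.lookup m k + 1) * Poly_Mapping.lookup f (m + Poly_Mapping.single k (1::nat)))"

text \<open>The operator D(alpha).  The sums over i, j, k \<ge> 1 are formally infinite, but
  on any element only finitely many terms are nonzero; Sum_any sums exactly those.\<close>
definition Dop :: "sym \<Rightarrow> sym" where
  "Dop f =
     Sum_any (\<lambda>(i, j). if 1 \<le> i \<and> 1 \<le> j
        then const (of_nat (i + j) * alpha) * (pvar i * pvar j * dp (i + j) f) else 0)
   + Sum_any (\<lambda>(i, j). if 1 \<le> i \<and> 1 \<le> j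
        then const (of_nat (i * j) * alpha ^ 2) * (pvar (i + j) * dp i (dp j f)) else 0)
   + const (alpha * (alpha - 1)) *
       Sum_any (\<lambda>k. if 1 \<le> k then const (of_nat (k ^ 2)) * (pvar k * dp k f) else 0)"

text \<open>Partitions of n encoded by multiplicity maps m (m_i = multiplicity of part i).\<close>
definition part_mults :: "nat \<Rightarrow> (nat \<Rightarrow>\<^sub>0 nat) set" where
  "part_mults n = {m. Poly_Mapping.lookup m 0 = 0 \<and> (\<Sum>i\<in>Poly_Mapping.keys m. i * Poly_Mapping.lookup m i) = n}"

definition zee :: "(nat \<Rightarrow>\<^sub>0 nat) \<Rightarrow> nat" where
  "zee m = (\<Prod>i\<in>Poly_Mapping.keys m. i ^ Poly_Mapping.lookup m i * fact (Poly_Mapping.lookup m i))"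

definition len :: "(nat \<Rightarrow>\<^sub>0 nat) \<Rightarrow> nat" where
  "len m = (\<Sum>i\<in>Poly_Mapping.keys m. Poly_Mapping.lookup m i)"

definition Qf :: "int \<Rightarrow> sym" where
  "Qf n = (if n < 0 then 0 else
     (\<Sum>m\<in>part_mults (nat n).
        const (inverse (alpha ^ len m * of_nat (zee m))) * Poly_Mapping.single m 1))"

definition qlist :: "int list \<Rightarrow> sym" where
  "qlist xs = prod_list (map Qf xs)"

definition is_partition :: "nat list \<Rightarrow> bool" where
  "is_partition lam \<longleftrightarrow> sorted_wrt (\<ge>) lam \<and> (\<forall>x\<in>set lam. 0 < x)"

text \<open>R_ij^k q_lam for 1 \<le> i < j \<le> l (1-based indices): raise the i-th index by k,
  lower the j-th by k; zero when k exceeds lam_j (since then Q of a negative index).\<close>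
definition Rop :: "nat \<Rightarrow> nat \<Rightarrow> nat \<Rightarrow> nat list \<Rightarrow> sym" where
  "Rop i j k lam =
     qlist ((map int lam)[i - 1 := int (lam ! (i - 1)) + int k,
                          j - 1 := int (lam ! (j - 1)) - int k])"

definition e_lam :: "nat list \<Rightarrow> F" where
  "e_lam lam = alpha ^ 2 * of_nat (\<Sum>x\<leftarrow>lam. x ^ 2)
     + alpha * (of_nat (sum_list lam) - 2 * of_nat (\<Sum>i<length lam. (i + 1) * lam ! i))"

end

theory Submission
  imports Defs
begin

text \<open>
  D is a second order differential operator, so D(fg) = D(f) g + f D(g) + 2 J(f,g) with the
  bilinear join term J(f,g) = sum_{i,j} ij alpha^2 p_{i+j} (df/dp_i) (dg/dp_j).
  Removing one part k from the partitions indexing Q_n gives dQ_n/dp_k = Q_{n-k}/(alpha k), and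
  together with Euler's identity for the homogeneous Q_n this gives Newton's identity
  sum_k p_k Q_{n-k} = alpha n Q_n.  Hence each Q_a is an eigenvector, D(Q_a) = (alpha^2 a^2 - alpha a) Q_a,
  and an induction on b gives
  J(Q_a, Q_b) = - alpha b Q_a Q_b + sum_{k=1..b} alpha (a - b + 2k) Q_{a+k} Q_{b-k}.
  Expanding D(q_lambda) by the Leibniz rule one factor at a time produces the raising operator sum,
  while the terms - alpha b collect into the part - 2 alpha sum_i (i - 1) lambda_i of e_lambda(alpha).
  The infinite sums in D are handled by cutting them off at an N beyond all variables involved.
\<close>

abbreviation lookup :: "('a \<Rightarrow>\<^sub>0 'b::zero) \<Rightarrow> 'a \<Rightarrow> 'b" where
  "lookup \<equiv> Poly_Mapping.lookup"
abbreviation single :: "'a \<Rightarrow> 'b::zero \<Rightarrow> 'a \<Rightarrow>\<^sub>0 'b" where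
  "single \<equiv> Poly_Mapping.single"
abbreviation keys :: "('a \<Rightarrow>\<^sub>0 'b::zero) \<Rightarrow> 'a set" where
  "keys \<equiv> Poly_Mapping.keys"

section \<open>Constants and partial derivatives\<close>

lemma alpha_nonzero: "alpha \<noteq> 0"
  unfolding alpha_def by (simp add: Zero_fract_def eq_fract)

lemma const_0 [simp]: "const 0 = 0"
  by (simp add: const_def)

lemma const_1 [simp]: "const 1 = 1"
  by (simp add: const_def)

lemma const_add: "const (a + b) = const a + const b"
  by (simp add: const_def single_add)

lemma const_diff: "const (a - b) = const a - const b"
  by (simp add: const_def single_diff)

lemma const_mult: "const (a * b) = const a * const b"
  by (simp add: const_def mult_single)

lemma const_of_nat: "const (of_nat n) = of_nat n"
  by (simp add: const_def)

lemma const_numeral: "const (numeral n) = numeral n"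
  by (simp add: const_def)

lemma const_mult_single: "const c * single m d = single m (c * d)"
  by (simp add: const_def mult_single)

lemma single_sum: "single m (sum f A) = (\<Sum>x\<in>A. single m (f x))"
  by (induction A rule: infinite_finite_induct) (auto simp: single_add)

lemma poly_mapping_sum_single: "f = (\<Sum>m\<in>keys f. single m (lookup f m))"
  by (rule poly_mapping_eqI) (auto simp: lookup_sum lookup_single when_def in_keys_iff sum.delta)

lemma add_single_eq_iff:
  "m' + single k (1::nat) = m \<longleftrightarrow> lookup m k \<noteq> 0 \<and> m' = m - single k 1"
proof
  assume "m' + single k 1 = m"
  then show "lookup m k \<noteq> 0 \<and> m' = m - single k 1"
    by (auto simp: lookup_add)
next
  assume "lookup m k \<noteq> 0 \<and> m' = m - single k 1"
  then show "m' + single k 1 = m"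
    by (intro poly_mapping_eqI) (auto simp: lookup_add lookup_minus lookup_single when_def)
qed

lemma lookup_dp: "lookup (dp k f) m = of_nat (lookup m k + 1) * lookup f (m + single k 1)"
proof -
  have "inj (\<lambda>m::nat \<Rightarrow>\<^sub>0 nat. m + single k 1)"
    by (auto intro: injI)
  then have "finite ((\<lambda>m. m + single k 1) -` keys f)"
    by (simp add: finite_vimageI)
  moreover have "{m. of_nat (lookup m k + 1) * lookup f (m + single k (1::nat)) \<noteq> 0}
      \<subseteq> (\<lambda>m. m + single k 1) -` keys f"
    by (auto simp: in_keys_iff)
  ultimately show ?thesis
    unfolding dp_def by (subst Abs_poly_mapping_inverse) (auto intro: finite_subset)
qed

lemma dp_0 [simp]: "dp k 0 = 0"
  by (rule poly_mapping_eqI) (simp add: lookup_dp)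

lemma dp_add: "dp k (f + g) = dp k f + dp k g"
  by (rule poly_mapping_eqI) (simp add: lookup_dp lookup_add algebra_simps)

lemma dp_sum: "dp k (sum f A) = (\<Sum>x\<in>A. dp k (f x))"
  by (induction A rule: infinite_finite_induct) (auto simp: dp_add)

lemma dp_single:
  "dp k (single m c) =
     (if lookup m k = 0 then 0 else single (m - single k 1) (of_nat (lookup m k) * c))"
proof (rule poly_mapping_eqI)
  fix m'
  show "lookup (dp k (single m c)) m' =
     lookup (if lookup m k = 0 then 0 else single (m - single k 1) (of_nat (lookup m k) * c)) m'"
  proof (cases "m' + single k 1 = m")
    case True
    then have "lookup m k = lookup m' k + 1" "m' = m - single k 1"
      by (auto simp: lookup_add add_single_eq_iff[symmetric])
    then show ?thesis
      using True by (simp add: lookup_dp)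
  next
    case False
    then have "m - single k 1 \<noteq> m' \<or> lookup m k = 0"
      using add_single_eq_iff[of m' k m] by auto
    then show ?thesis
      using False by (auto simp: lookup_dp lookup_single when_def)
  qed
qed

lemma dp_const [simp]: "dp k (const c) = 0"
  by (simp add: const_def dp_single)

lemma dp_1 [simp]: "dp k 1 = 0"
  using dp_const[of k 1] by simp

lemma pvar_mult_dp_single: "pvar k * dp k (single m c) = single m (of_nat (lookup m k) * c)"
proof (cases "lookup m k = 0")
  case False
  then have "single k 1 + (m - single k 1) = m"
    using add_single_eq_iff[of "m - single k 1" k m] by (simp add: add.commute)
  then show ?thesis
    using False by (simp add: dp_single pvar_def mult_single)
qed (simp add: dp_single)

lemma dp_single_mult_single:
  "dp k (single m a * single m' b) = dp k (single m a) * single m' b + single m a * dp k (single m' b)"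
proof -
  have diff_left: "lookup m k \<noteq> 0 \<Longrightarrow> m + m' - single k 1 = (m - single k 1) + m'"
    and diff_right: "lookup m' k \<noteq> 0 \<Longrightarrow> m + m' - single k 1 = m + (m' - single k 1)"
    by (auto intro!: poly_mapping_eqI simp: lookup_add lookup_minus lookup_single when_def)
  have "lookup (m + m') k = lookup m k + lookup m' k"
    by (simp add: lookup_add)
  then show ?thesis
    using diff_left diff_right
    by (cases "lookup m k = 0"; cases "lookup m' k = 0")
      (simp_all add: mult_single dp_single algebra_simps flip: single_add)
qed

lemma dp_mult: "dp k (f * g) = dp k f * g + f * dp k g"
proof -
  let ?sf = "\<lambda>m. single m (lookup f m)" and ?sg = "\<lambda>m. single m (lookup g m)"
  have "dp k (f * g) = dp k ((\<Sum>m\<in>keys f. ?sf m) * (\<Sum>m\<in>keys g. ?sg m))"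
    by (simp flip: poly_mapping_sum_single)
  also have "\<dots> = (\<Sum>m\<in>keys f. \<Sum>m'\<in>keys g. dp k (?sf m) * ?sg m' + ?sf m * dp k (?sg m'))"
    by (simp add: sum_product dp_sum dp_single_mult_single)
  also have "\<dots> = dp k (\<Sum>m\<in>keys f. ?sf m) * (\<Sum>m\<in>keys g. ?sg m)
      + (\<Sum>m\<in>keys f. ?sf m) * dp k (\<Sum>m\<in>keys g. ?sg m)"
    by (simp add: sum_product dp_sum sum.distrib)
  finally show ?thesis
    by (simp flip: poly_mapping_sum_single)
qed

lemma dp_const_mult: "dp k (const c * f) = const c * dp k f"
  by (simp add: dp_mult)

lemma dp_commute: "dp i (dp j f) = dp j (dp i f)"
proof (rule poly_mapping_eqI)
  fix m
  have "m + single i 1 + single j 1 = m + single j 1 + single i (1::nat)"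
    by (simp add: add_ac)
  then show "lookup (dp i (dp j f)) m = lookup (dp j (dp i f)) m"
    by (cases "i = j") (simp_all add: lookup_dp lookup_add lookup_single mult.left_commute)
qed

section \<open>The functions Q_n\<close>

definition weight :: "(nat \<Rightarrow>\<^sub>0 nat) \<Rightarrow> nat" where
  "weight m = (\<Sum>i\<in>keys m. i * lookup m i)"

lemma part_mults_iff: "m \<in> part_mults n \<longleftrightarrow> lookup m 0 = 0 \<and> weight m = n"
  by (simp add: part_mults_def weight_def)

lemma weight_eq_sum_superset:
  "finite S \<Longrightarrow> keys m \<subseteq> S \<Longrightarrow> weight m = (\<Sum>i\<in>S. i * lookup m i)"
  unfolding weight_def by (rule sum.mono_neutral_left) (auto simp: in_keys_iff)

lemma len_eq_sum_superset:
  "finite S \<Longrightarrow> keys m \<subseteq> S \<Longrightarrow> len m = (\<Sum>i\<in>S. lookup m i)"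
  unfolding len_def by (rule sum.mono_neutral_left) (auto simp: in_keys_iff)

lemma zee_eq_prod_superset:
  "finite S \<Longrightarrow> keys m \<subseteq> S \<Longrightarrow> zee m = (\<Prod>i\<in>S. i ^ lookup m i * fact (lookup m i))"
  unfolding zee_def by (rule prod.mono_neutral_left) (auto simp: in_keys_iff)

lemma zee_nonzero: "lookup m 0 = 0 \<Longrightarrow> zee m \<noteq> 0"
  unfolding zee_def by (auto simp: in_keys_iff)

lemma part_mults_bounds:
  assumes "m \<in> part_mults n"
  shows "keys m \<subseteq> {1..n}" and "lookup m i \<le> n"
proof -
  have m0: "lookup m 0 = 0" and w: "(\<Sum>i\<in>keys m. i * lookup m i) = n"
    using assms by (auto simp: part_mults_def)
  have part_le: "i * lookup m i \<le> n" for i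
    using w member_le_sum[of i "keys m" "\<lambda>i. i * lookup m i"] by (cases "i \<in> keys m") (auto simp: in_keys_iff)
  show "keys m \<subseteq> {1..n}"
  proof
    fix i assume "i \<in> keys m"
    then have "lookup m i \<noteq> 0"
      by (simp add: in_keys_iff)
    then have "i \<noteq> 0" and "i \<le> i * lookup m i"
      using m0 by (metis, simp)
    then show "i \<in> {1..n}"
      using part_le[of i] by (simp only: atLeastAtMost_iff) linarith
  qed
  show "lookup m i \<le> n"
    using m0 part_le[of i] by (cases "i = 0") (auto intro: order.trans[rotated])
qed

lemma finite_part_mults: "finite (part_mults n)"
proof -
  let ?F = "{f. \<forall>x. (x \<in> {1..n} \<longrightarrow> f x \<in> {0..n}) \<and> (x \<notin> {1..n} \<longrightarrow> f x = (0::nat))}"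
  have "finite ?F"
    using finite_set_of_finite_funs[of "{1..n}" "{0..n}" 0] by simp
  moreover have "inj (lookup :: (nat \<Rightarrow>\<^sub>0 nat) \<Rightarrow> _)"
    by (rule injI, rule poly_mapping_eqI) simp
  ultimately have "finite (lookup -` ?F)"
    by (rule finite_vimageI)
  moreover have "part_mults n \<subseteq> lookup -` ?F"
    using part_mults_bounds by (fastforce simp: in_keys_iff)
  ultimately show ?thesis
    by (rule finite_subset[rotated])
qed

context
  fixes m :: "nat \<Rightarrow>\<^sub>0 nat" and k :: nat
begin

private lemma finite_keys_insert: "finite (insert k (keys m))"
  by simp

private lemma keys_add_single: "keys (m + single k 1) \<subseteq> insert k (keys m)" "keys m \<subseteq> insert k (keys m)"
  using keys_add[of m "single k 1"] by auto

lemma weight_add_single: "weight (m + single k 1) = weight m + k"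
proof -
  have "weight (m + single k 1) = (\<Sum>i\<in>insert k (keys m). i * lookup m i + (if i = k then k else 0))"
    unfolding weight_eq_sum_superset[OF finite_keys_insert keys_add_single(1)]
    by (intro sum.cong) (auto simp: lookup_add lookup_single)
  then show ?thesis
    unfolding weight_eq_sum_superset[OF finite_keys_insert keys_add_single(2)]
    by (simp add: sum.distrib)
qed

lemma len_add_single: "len (m + single k 1) = len m + 1"
proof -
  have "lookup (m + single k 1) = (\<lambda>i. lookup m i + (if i = k then 1 else 0))"
    by (simp add: fun_eq_iff lookup_add lookup_single when_def)
  then show ?thesis
    unfolding len_eq_sum_superset[OF finite_keys_insert keys_add_single(1)]
      len_eq_sum_superset[OF finite_keys_insert keys_add_single(2)]
    by (simp add: sum.distrib)
qed

lemma zee_add_single: "zee (m + single k 1) = zee m * (k * (lookup m k + 1))"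
proof -
  let ?S = "insert k (keys m)"
  let ?z = "\<lambda>m i. i ^ lookup m i * fact (lookup m i)"
  have "zee (m + single k 1) = ?z (m + single k 1) k * (\<Prod>i\<in>?S - {k}. ?z m i)"
    unfolding zee_eq_prod_superset[OF finite_keys_insert keys_add_single(1)]
    by (subst prod.remove[of _ k]) (auto simp: lookup_add lookup_single intro!: prod.cong)
  also have "\<dots> = (k * (lookup m k + 1)) * (?z m k * (\<Prod>i\<in>?S - {k}. ?z m i))"
    by (simp add: lookup_add algebra_simps)
  also have "?z m k * (\<Prod>i\<in>?S - {k}. ?z m i) = zee m"
    unfolding zee_eq_prod_superset[OF finite_keys_insert keys_add_single(2)]
    by (subst prod.remove[of _ k]) auto
  finally show ?thesis
    by simp
qed

lemma part_mults_add_single: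
  assumes "k \<ge> 1"
  shows "m + single k 1 \<in> part_mults (n + k) \<longleftrightarrow> m \<in> part_mults n"
  unfolding part_mults_iff weight_add_single using assms by (simp add: lookup_add lookup_single)

end

definition Q_coeff :: "(nat \<Rightarrow>\<^sub>0 nat) \<Rightarrow> F" where
  "Q_coeff m = inverse (alpha ^ len m * of_nat (zee m))"

lemma Qf_of_nat: "Qf (int n) = (\<Sum>m\<in>part_mults n. single m (Q_coeff m))"
  by (simp add: Qf_def Q_coeff_def const_def mult_single)

lemma Qf_neg: "x < 0 \<Longrightarrow> Qf x = 0"
  by (simp add: Qf_def)

lemma Q_coeff_add_single:
  assumes "k \<ge> 1" and "lookup m 0 = 0"
  shows "of_nat (lookup m k + 1) * Q_coeff (m + single k 1) = inverse (alpha * of_nat k) * Q_coeff m"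
proof -
  have "(of_nat (zee m) :: F) \<noteq> 0" "(of_nat k :: F) \<noteq> 0" "(of_nat (lookup m k + 1) :: F) \<noteq> 0"
    using zee_nonzero assms by (simp_all del: of_nat_Suc)
  then show ?thesis
    unfolding Q_coeff_def len_add_single zee_add_single of_nat_mult
    using alpha_nonzero by (simp add: inverse_mult_distrib power_add)
qed

lemma dp_Qf_of_nat_eq_sum:
  "dp k (Qf (int n)) = (\<Sum>m\<in>{m \<in> part_mults n. lookup m k \<noteq> 0}.
     single (m - single k 1) (of_nat (lookup m k) * Q_coeff m))"
proof -
  have "dp k (Qf (int n)) = (\<Sum>m\<in>part_mults n.
      if lookup m k \<noteq> 0 then single (m - single k 1) (of_nat (lookup m k) * Q_coeff m) else 0)"
    by (auto simp: Qf_of_nat dp_sum dp_single intro!: sum.cong)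
  also have "\<dots> = (\<Sum>m\<in>{m \<in> part_mults n. lookup m k \<noteq> 0}.
      single (m - single k 1) (of_nat (lookup m k) * Q_coeff m))"
    by (rule sum.inter_filter[OF finite_part_mults, symmetric])
  finally show ?thesis .
qed

lemma dp_Qf_of_nat:
  assumes k: "k \<ge> 1"
  shows "dp k (Qf (int n)) = const (inverse (alpha * of_nat k)) * Qf (int n - int k)"
proof -
  let ?e = "single k (1::nat)"
  let ?c = "inverse (alpha * of_nat k)"
  let ?T = "{m \<in> part_mults n. lookup m k \<noteq> 0}"
  note dp_eq = dp_Qf_of_nat_eq_sum[of k n]
  show ?thesis
  proof (cases "k \<le> n")
    case False
    have "?T = {}"
    proof (intro equals0I)
      fix m assume "m \<in> ?T"
      then have "k \<in> keys m" and "keys m \<subseteq> {1..n}"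
        using part_mults_bounds(1) by (auto simp: in_keys_iff)
      then show False
        using False by auto
    qed
    then show ?thesis
      using dp_eq False by (simp add: Qf_neg)
  next
    case True
    then have n_eq: "int n - int k = int (n - k)" "n - k + k = n"
      by simp_all
    have "(\<Sum>m\<in>part_mults (n - k). single m (?c * Q_coeff m)) =
        (\<Sum>m\<in>?T. single (m - ?e) (of_nat (lookup m k) * Q_coeff m))"
    proof (rule sum.reindex_bij_witness[where i = "\<lambda>m. m - ?e" and j = "\<lambda>m. m + ?e"])
      fix a assume a: "a \<in> part_mults (n - k)"
      show "a + ?e - ?e = a"
        by simp
      show "a + ?e \<in> ?T"
        using a part_mults_add_single[OF k, of a "n - k"] by (simp add: n_eq lookup_add)
      show "single (a + ?e - ?e) (of_nat (lookup (a + ?e) k) * Q_coeff (a + ?e)) = single a (?c * Q_coeff a)"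
        using a Q_coeff_add_single[OF k, of a] by (simp add: part_mults_iff lookup_add)
    next
      fix b assume b: "b \<in> ?T"
      then show b_eq: "b - ?e + ?e = b"
        using add_single_eq_iff[of "b - ?e" k b] by blast
      show "b - ?e \<in> part_mults (n - k)"
        using b part_mults_add_single[OF k, of "b - ?e" "n - k"] unfolding n_eq b_eq by simp
    qed
    then show ?thesis
      using dp_eq by (simp add: n_eq(1) Qf_of_nat[of "n - k"] sum_distrib_left const_mult_single)
  qed
qed

lemma dp_Qf:
  assumes "k \<ge> 1"
  shows "dp k (Qf x) = const (inverse (alpha * of_nat k)) * Qf (x - int k)"
proof (cases "x < 0")
  case False
  then obtain n where "x = int n"
    by (metis nonneg_int_cases not_less)
  then show ?thesis
    using dp_Qf_of_nat[OF assms] by simp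
qed (simp add: Qf_neg)

lemma const_mult_dp_Qf:
  assumes "k \<ge> 1"
  shows "const (alpha * of_nat k) * dp k (Qf x) = Qf (x - int k)"
proof -
  have "(of_nat k :: F) \<noteq> 0"
    using assms by simp
  then have "alpha * of_nat k * inverse (alpha * of_nat k) = (1::F)"
    using alpha_nonzero by (simp add: field_simps)
  then have "const (alpha * of_nat k) * const (inverse (alpha * of_nat k)) = 1"
    by (metis const_1 const_mult)
  then show ?thesis
    unfolding dp_Qf[OF assms] mult.assoc[symmetric] by (simp only: mult_1_left)
qed

lemma euler_Qf:
  "(\<Sum>k\<in>{1..n}. const (of_nat k) * (pvar k * dp k (Qf (int n)))) = const (of_nat n) * Qf (int n)"
proof -
  have "(\<Sum>k\<in>{1..n}. const (of_nat k) * (pvar k * dp k (Qf (int n))))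
      = (\<Sum>k\<in>{1..n}. \<Sum>m\<in>part_mults n. single m (of_nat k * (of_nat (lookup m k) * Q_coeff m)))"
    by (simp add: Qf_of_nat dp_sum sum_distrib_left pvar_mult_dp_single const_mult_single)
  also have "\<dots> = (\<Sum>m\<in>part_mults n. single m (\<Sum>k\<in>{1..n}. of_nat k * (of_nat (lookup m k) * Q_coeff m)))"
    by (subst sum.swap) (simp add: single_sum)
  also have "\<dots> = (\<Sum>m\<in>part_mults n. single m (of_nat n * Q_coeff m))"
  proof (rule sum.cong[OF refl])
    fix m assume m: "m \<in> part_mults n"
    then have weight_m: "(\<Sum>k\<in>{1..n}. k * lookup m k) = n"
      using weight_eq_sum_superset[OF _ part_mults_bounds(1)[OF m]] by (simp add: part_mults_iff)
    have "(\<Sum>k\<in>{1..n}. of_nat k * (of_nat (lookup m k) * Q_coeff m))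
        = of_nat (\<Sum>k\<in>{1..n}. k * lookup m k) * (Q_coeff m :: F)"
      by (simp add: of_nat_sum sum_distrib_right mult.assoc)
    then show "single m (\<Sum>k\<in>{1..n}. of_nat k * (of_nat (lookup m k) * Q_coeff m)) = single m (of_nat n * Q_coeff m)"
      unfolding weight_m by simp
  qed
  also have "\<dots> = const (of_nat n) * Qf (int n)"
    by (simp add: Qf_of_nat sum_distrib_left const_mult_single)
  finally show ?thesis .
qed

lemma newton_Qf:
  assumes "x \<le> int N"
  shows "(\<Sum>k\<in>{1..N}. pvar k * Qf (x - int k)) = const (alpha * of_int x) * Qf x"
proof (cases "x < 0")
  case False
  then obtain n where x: "x = int n"
    by (metis nonneg_int_cases not_less)
  have "(\<Sum>k\<in>{1..N}. pvar k * Qf (x - int k)) = (\<Sum>k\<in>{1..n}. pvar k * Qf (x - int k))"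
    using assms x by (intro sum.mono_neutral_right) (auto simp: Qf_neg)
  also have "\<dots> = (\<Sum>k\<in>{1..n}. const alpha * (const (of_nat k) * (pvar k * dp k (Qf (int n)))))"
  proof (intro sum.cong refl)
    fix k assume "k \<in> {1..n}"
    then have "const alpha * const (of_nat k) * dp k (Qf (int n)) = Qf (x - int k)"
      unfolding x by (simp add: const_mult_dp_Qf flip: const_mult)
    then show "pvar k * Qf (x - int k) = const alpha * (const (of_nat k) * (pvar k * dp k (Qf (int n))))"
      by (simp add: ac_simps)
  qed
  also have "\<dots> = const alpha * (const (of_nat n) * Qf (int n))"
    by (simp only: sum_distrib_left[symmetric] euler_Qf)
  also have "\<dots> = const (alpha * of_int x) * Qf x"
    unfolding x by (simp add: const_mult)
  finally show ?thesis .
qed (simp add: Qf_neg)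

section \<open>D as a second order operator\<close>

definition vars_le :: "nat \<Rightarrow> sym \<Rightarrow> bool" where
  "vars_le N f \<longleftrightarrow> (\<forall>k>N. dp k f = 0)"

definition Dsplit :: "nat \<Rightarrow> sym \<Rightarrow> sym" where
  "Dsplit N f = (\<Sum>i\<in>{1..N}. \<Sum>j\<in>{1..N}.
     const (of_nat (i + j) * alpha) * (pvar i * pvar j * dp (i + j) f))"

definition Djoin :: "nat \<Rightarrow> sym \<Rightarrow> sym" where
  "Djoin N f = (\<Sum>i\<in>{1..N}. \<Sum>j\<in>{1..N}.
     const (of_nat (i * j) * alpha ^ 2) * (pvar (i + j) * dp i (dp j f)))"

definition Deuler :: "nat \<Rightarrow> sym \<Rightarrow> sym" where
  "Deuler N f = const (alpha * (alpha - 1)) * (\<Sum>k\<in>{1..N}. const (of_nat (k ^ 2)) * (pvar k * dp k f))"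

definition Dtrunc :: "nat \<Rightarrow> sym \<Rightarrow> sym" where
  "Dtrunc N f = Dsplit N f + Djoin N f + Deuler N f"

definition join_form :: "nat \<Rightarrow> sym \<Rightarrow> sym \<Rightarrow> sym" where
  "join_form N f g = (\<Sum>i\<in>{1..N}. \<Sum>j\<in>{1..N}.
     const (of_nat (i * j) * alpha ^ 2) * (pvar (i + j) * (dp i f * dp j g)))"

lemma Sum_any_eq_double_sum:
  fixes g :: "'a \<times> 'b \<Rightarrow> 'c::comm_monoid_add"
  assumes "finite A" "finite B" and "\<And>i j. g (i, j) \<noteq> 0 \<Longrightarrow> i \<in> A \<and> j \<in> B"
  shows "Sum_any g = (\<Sum>i\<in>A. \<Sum>j\<in>B. g (i, j))"
proof -
  have "Sum_any g = sum g (A \<times> B)"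
    using assms by (intro Sum_any.expand_superset) auto
  then show ?thesis
    by (simp add: sum.cartesian_product)
qed

lemma Dop_eq_Dtrunc:
  assumes "vars_le N f"
  shows "Dop f = Dtrunc N f"
proof -
  have dp_f: "k \<le> N" if "dp k f \<noteq> 0" for k
    using assms that not_le by (auto simp: vars_le_def)
  have dp_dp_f: "i \<le> N \<and> j \<le> N" if "dp i (dp j f) \<noteq> 0" for i j
    using that dp_f dp_commute[of i j f] by (metis dp_0 not_le)
  have "Sum_any (\<lambda>(i, j). if 1 \<le> i \<and> 1 \<le> j
      then const (of_nat (i + j) * alpha) * (pvar i * pvar j * dp (i + j) f) else 0) = Dsplit N f"
    unfolding Dsplit_def
    by (subst Sum_any_eq_double_sum[of "{1..N}" "{1..N}"]) (auto intro!: sum.cong dest: dp_f split: if_splits)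
  moreover have "Sum_any (\<lambda>(i, j). if 1 \<le> i \<and> 1 \<le> j
      then const (of_nat (i * j) * alpha ^ 2) * (pvar (i + j) * dp i (dp j f)) else 0) = Djoin N f"
    unfolding Djoin_def
    by (subst Sum_any_eq_double_sum[of "{1..N}" "{1..N}"]) (auto intro!: sum.cong dest: dp_dp_f split: if_splits)
  moreover have "Sum_any (\<lambda>k. if 1 \<le> k then const (of_nat (k ^ 2)) * (pvar k * dp k f) else 0)
      = (\<Sum>k\<in>{1..N}. const (of_nat (k ^ 2)) * (pvar k * dp k f))"
    by (subst Sum_any.expand_superset[of "{1..N}"]) (auto intro!: sum.cong dest: dp_f split: if_splits)
  ultimately show ?thesis
    unfolding Dop_def Dtrunc_def Deuler_def by simp
qed

lemma Dsplit_mult: "Dsplit N (f * g) = Dsplit N f * g + f * Dsplit N g"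
proof -
  have "c * (P * dp k (f * g)) = c * (P * dp k f) * g + f * (c * (P * dp k g))" for c P k
    by (simp add: dp_mult algebra_simps)
  then show ?thesis
    unfolding Dsplit_def by (simp add: sum.distrib sum_distrib_left sum_distrib_right)
qed

lemma Deuler_mult: "Deuler N (f * g) = Deuler N f * g + f * Deuler N g"
proof -
  have "c * (P * dp k (f * g)) = c * (P * dp k f) * g + f * (c * (P * dp k g))" for c P k
    by (simp add: dp_mult algebra_simps)
  then have "(\<Sum>k\<in>{1..N}. const (of_nat (k ^ 2)) * (pvar k * dp k (f * g)))
      = (\<Sum>k\<in>{1..N}. const (of_nat (k ^ 2)) * (pvar k * dp k f)) * g
        + f * (\<Sum>k\<in>{1..N}. const (of_nat (k ^ 2)) * (pvar k * dp k g))"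
    by (simp add: sum.distrib sum_distrib_left sum_distrib_right)
  then show ?thesis
    unfolding Deuler_def by (simp add: algebra_simps)
qed

lemma Djoin_mult: "Djoin N (f * g) = Djoin N f * g + f * Djoin N g + 2 * join_form N f g"
proof -
  have "c * (P * dp i (dp j (f * g))) = c * (P * dp i (dp j f)) * g + f * (c * (P * dp i (dp j g)))
      + c * (P * (dp i f * dp j g)) + c * (P * (dp j f * dp i g))" for c P i j
    by (simp add: dp_mult dp_add algebra_simps)
  then have "Djoin N (f * g) = Djoin N f * g + f * Djoin N g + join_form N f g
      + (\<Sum>i\<in>{1..N}. \<Sum>j\<in>{1..N}. const (of_nat (i * j) * alpha ^ 2) * (pvar (i + j) * (dp j f * dp i g)))"
    unfolding Djoin_def join_form_def by (simp add: sum.distrib sum_distrib_left sum_distrib_right)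
  also have "(\<Sum>i\<in>{1..N}. \<Sum>j\<in>{1..N}. const (of_nat (i * j) * alpha ^ 2) * (pvar (i + j) * (dp j f * dp i g)))
      = join_form N f g"
    unfolding join_form_def by (subst sum.swap) (simp add: mult.commute add.commute)
  finally show ?thesis
    by simp
qed

lemma Dtrunc_mult: "Dtrunc N (f * g) = Dtrunc N f * g + f * Dtrunc N g + 2 * join_form N f g"
  unfolding Dtrunc_def Dsplit_mult Djoin_mult Deuler_mult by (simp add: algebra_simps)

lemma Dtrunc_1: "Dtrunc N 1 = 0"
  by (simp add: Dtrunc_def Dsplit_def Djoin_def Deuler_def)

lemma join_form_mult_right: "join_form N f (g * h) = join_form N f g * h + g * join_form N f h"
proof -
  have "c * (P * (a * dp j (g * h))) = c * (P * (a * dp j g)) * h + g * (c * (P * (a * dp j h)))" for c P a j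
    by (simp add: dp_mult algebra_simps)
  then show ?thesis
    unfolding join_form_def by (simp add: sum.distrib sum_distrib_left sum_distrib_right)
qed

lemma join_form_1_right [simp]: "join_form N f 1 = 0"
  by (simp add: join_form_def)

lemma vars_le_mult: "vars_le N f \<Longrightarrow> vars_le N g \<Longrightarrow> vars_le N (f * g)"
  by (simp add: vars_le_def dp_mult)

lemma vars_le_qlist: "\<forall>x\<in>set xs. x \<le> int N \<Longrightarrow> vars_le N (qlist xs)"
proof (induction xs)
  case (Cons x xs)
  have "vars_le N (Qf x)"
    using Cons.prems by (auto simp: vars_le_def dp_Qf Qf_neg)
  with Cons show ?case
    by (simp add: qlist_def vars_le_mult)
qed (simp add: qlist_def vars_le_def)

section \<open>Q_a is an eigenvector of D\<close>

lemma sum_pairs_by_sum_index: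
  fixes G :: "nat \<Rightarrow> 'a::semiring_1"
  assumes "\<And>m. m > N \<Longrightarrow> G m = 0"
  shows "(\<Sum>i\<in>{1..N}. \<Sum>j\<in>{1..N}. G (i + j)) = (\<Sum>m\<in>{1..N}. of_nat (m - 1) * G m)"
proof -
  have "(\<Sum>j\<in>{1..N}. G (i + j)) = (\<Sum>m\<in>{1..N}. if i < m then G m else 0)" for i
  proof -
    have "(\<lambda>j. G (i + j)) = (\<lambda>j. G (j + i))"
      by (simp add: add.commute)
    then have "(\<Sum>j\<in>{1..N}. G (i + j)) = (\<Sum>m\<in>{1 + i..N + i}. G m)"
      by (simp only: sum.shift_bounds_cl_nat_ivl)
    also have "\<dots> = (\<Sum>m\<in>{1 + i..N}. G m)"
      using assms by (intro sum.mono_neutral_right) auto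
    also have "\<dots> = (\<Sum>m\<in>{1..N}. if i < m then G m else 0)"
      by (simp add: sum.inter_filter[symmetric]) (intro sum.cong; auto)
    finally show ?thesis .
  qed
  then have "(\<Sum>i\<in>{1..N}. \<Sum>j\<in>{1..N}. G (i + j)) = (\<Sum>m\<in>{1..N}. \<Sum>i\<in>{1..N}. if i < m then G m else 0)"
    by (simp only: sum.swap[of "\<lambda>i m. if i < m then G m else 0"])
  also have "\<dots> = (\<Sum>m\<in>{1..N}. of_nat (m - 1) * G m)"
  proof (intro sum.cong refl)
    fix m assume "m \<in> {1..N}"
    then have "{i \<in> {1..N}. i < m} = {1..<m}"
      by auto
    then show "(\<Sum>i\<in>{1..N}. if i < m then G m else 0) = of_nat (m - 1) * G m"
      by (simp add: sum.inter_filter[symmetric])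
  qed
  finally show ?thesis .
qed

lemma Dsplit_Qf:
  assumes "a \<le> N"
  shows "Dsplit N (Qf (int a)) =
    (\<Sum>i\<in>{1..N}. const (alpha * of_int (int a - int i)) * (pvar i * Qf (int a - int i)))"
proof -
  have "const (of_nat (i + j) * alpha) * (pvar i * pvar j * dp (i + j) (Qf (int a)))
      = pvar i * (pvar j * Qf (int a - int i - int j))" if "i \<ge> 1" for i j
  proof -
    have "const (alpha * of_nat (i + j)) * dp (i + j) (Qf (int a)) = Qf (int a - int i - int j)"
      using that const_mult_dp_Qf[of "i + j" "int a"] by (simp add: algebra_simps)
    then show ?thesis
      by (simp add: ac_simps)
  qed
  then have "Dsplit N (Qf (int a)) = (\<Sum>i\<in>{1..N}. pvar i * (\<Sum>j\<in>{1..N}. pvar j * Qf (int a - int i - int j)))"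
    unfolding Dsplit_def sum_distrib_left by (intro sum.cong refl) auto
  also have "\<dots> = (\<Sum>i\<in>{1..N}. pvar i * (const (alpha * of_int (int a - int i)) * Qf (int a - int i)))"
    using assms by (intro sum.cong refl arg_cong2[where f = "(*)"] newton_Qf) auto
  finally show ?thesis
    by (simp add: ac_simps)
qed

lemma Djoin_Qf:
  assumes "a \<le> N"
  shows "Djoin N (Qf (int a)) = (\<Sum>m\<in>{1..N}. of_nat (m - 1) * (pvar m * Qf (int a - int m)))"
proof -
  have "const (of_nat (i * j) * alpha ^ 2) * (pvar (i + j) * dp i (dp j (Qf (int a))))
      = pvar (i + j) * Qf (int a - int (i + j))" if "i \<ge> 1" "j \<ge> 1" for i j
  proof -
    have "const (of_nat (i * j) * alpha ^ 2) * dp i (dp j (Qf (int a)))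
        = const (alpha * of_nat i) * dp i (const (alpha * of_nat j) * dp j (Qf (int a)))"
      by (simp add: dp_const_mult const_mult power2_eq_square ac_simps)
    also have "\<dots> = Qf (int a - int (i + j))"
      using that by (simp add: const_mult_dp_Qf algebra_simps)
    finally show ?thesis
      by (simp add: ac_simps)
  qed
  then have "Djoin N (Qf (int a)) = (\<Sum>i\<in>{1..N}. \<Sum>j\<in>{1..N}. pvar (i + j) * Qf (int a - int (i + j)))"
    unfolding Djoin_def by (intro sum.cong refl) auto
  also have "\<dots> = (\<Sum>m\<in>{1..N}. of_nat (m - 1) * (pvar m * Qf (int a - int m)))"
    using assms by (intro sum_pairs_by_sum_index[where G = "\<lambda>m. pvar m * Qf (int a - int m)"]) (simp add: Qf_neg)
  finally show ?thesis .
qed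

lemma Deuler_Qf:
  "Deuler N (Qf (int a)) = (\<Sum>k\<in>{1..N}. const ((alpha - 1) * of_nat k) * (pvar k * Qf (int a - int k)))"
proof -
  have "const (alpha * (alpha - 1)) * (const (of_nat (k ^ 2)) * (pvar k * dp k (Qf (int a))))
      = const ((alpha - 1) * of_nat k) * (pvar k * Qf (int a - int k))" if "k \<ge> 1" for k
  proof -
    have "const (alpha * (alpha - 1)) * (const (of_nat (k ^ 2)) * (pvar k * dp k (Qf (int a))))
        = const ((alpha - 1) * of_nat k) * (pvar k * (const (alpha * of_nat k) * dp k (Qf (int a))))"
      by (simp only: const_mult of_nat_mult power2_eq_square ac_simps)
    then show ?thesis
      using that by (simp only: const_mult_dp_Qf)
  qed
  then show ?thesis
    unfolding Deuler_def sum_distrib_left by (intro sum.cong refl) auto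
qed

lemma Dtrunc_Qf:
  assumes "a \<le> N"
  shows "Dtrunc N (Qf (int a)) = const (alpha ^ 2 * of_nat a ^ 2 - alpha * of_nat a) * Qf (int a)"
proof -
  \<comment> \<open>coefficient of p_m Q_{a-m}: alpha (a - m) + (m - 1) + (alpha - 1) m = alpha a - 1\<close>
  have "Dtrunc N (Qf (int a)) = (\<Sum>m\<in>{1..N}. const (alpha * of_nat a - 1) * (pvar m * Qf (int a - int m)))"
    unfolding Dtrunc_def Dsplit_Qf[OF assms] Djoin_Qf[OF assms] Deuler_Qf sum.distrib[symmetric]
    by (intro sum.cong refl) (auto simp: of_nat_diff const_diff const_mult const_of_nat algebra_simps)
  also have "\<dots> = const (alpha * of_nat a - 1) * (const (alpha * of_nat a) * Qf (int a))"
  proof -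
    have "(\<Sum>m\<in>{1..N}. pvar m * Qf (int a - int m)) = const (alpha * of_nat a) * Qf (int a)"
      using newton_Qf[of "int a" N] assms by simp
    then show ?thesis
      unfolding sum_distrib_left[symmetric] by simp
  qed
  finally show ?thesis
    by (simp add: const_diff const_mult power2_eq_square algebra_simps)
qed

section \<open>The join form on products of functions Q\<close>

definition join_Q :: "nat \<Rightarrow> nat \<Rightarrow> sym" where
  "join_Q a b = (\<Sum>i\<in>{1..a}. \<Sum>j\<in>{1..b}. pvar (i + j) * (Qf (int a - int i) * Qf (int b - int j)))"

lemma join_form_Qf:
  assumes "a \<le> N" "b \<le> N"
  shows "join_form N (Qf (int a)) (Qf (int b)) = join_Q a b"
proof -
  have "const (of_nat (i * j) * alpha ^ 2) * (pvar (i + j) * (dp i (Qf (int a)) * dp j (Qf (int b))))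
      = pvar (i + j) * (Qf (int a - int i) * Qf (int b - int j))" if "i \<ge> 1" "j \<ge> 1" for i j
  proof -
    have "const (of_nat (i * j) * alpha ^ 2) * (dp i (Qf (int a)) * dp j (Qf (int b)))
        = (const (alpha * of_nat i) * dp i (Qf (int a))) * (const (alpha * of_nat j) * dp j (Qf (int b)))"
      by (simp add: const_mult power2_eq_square ac_simps)
    also have "\<dots> = Qf (int a - int i) * Qf (int b - int j)"
      using that by (simp only: const_mult_dp_Qf)
    finally show ?thesis
      by (simp add: ac_simps)
  qed
  then have "join_form N (Qf (int a)) (Qf (int b))
      = (\<Sum>i\<in>{1..N}. \<Sum>j\<in>{1..N}. pvar (i + j) * (Qf (int a - int i) * Qf (int b - int j)))"
    unfolding join_form_def by (intro sum.cong refl) auto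
  also have "\<dots> = (\<Sum>i\<in>{1..N}. \<Sum>j\<in>{1..b}. pvar (i + j) * (Qf (int a - int i) * Qf (int b - int j)))"
    using assms by (intro sum.cong refl sum.mono_neutral_right) (auto simp: Qf_neg)
  also have "\<dots> = join_Q a b"
    unfolding join_Q_def using assms by (intro sum.mono_neutral_right) (auto simp: Qf_neg)
  finally show ?thesis .
qed

lemma sum_atLeast1_atMost_Suc: "(\<Sum>k\<in>{1..Suc n}. f k) = f 1 + (\<Sum>k\<in>{1..n}. f (Suc k))"
proof -
  have "(\<Sum>k\<in>{1..Suc n}. f k) = f 1 + (\<Sum>k\<in>{Suc 1..Suc n}. f k)"
    by (rule sum.atLeast_Suc_atMost) simp
  then show ?thesis
    by (simp only: sum.shift_bounds_cl_Suc_ivl)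
qed

lemma join_Q_Suc_left:
  "join_Q (Suc a) b = join_Q a (Suc b) + const (alpha * of_nat (Suc b)) * (Qf (int a) * Qf (int (Suc b)))
     - const (alpha * of_nat (Suc a)) * (Qf (int (Suc a)) * Qf (int b))"
proof -
  have newton_Suc: "(\<Sum>j\<in>{1..c}. pvar (Suc j) * Qf (int c - int j))
      = const (alpha * of_nat (Suc c)) * Qf (int (Suc c)) - pvar 1 * Qf (int c)" for c
  proof -
    have "(\<Sum>k\<in>{1..Suc c}. pvar k * Qf (int (Suc c) - int k))
        = pvar 1 * Qf (int c) + (\<Sum>j\<in>{1..c}. pvar (Suc j) * Qf (int c - int j))"
      by (simp only: sum_atLeast1_atMost_Suc) simp
    then show ?thesis
      using newton_Qf[of "int (Suc c)" "Suc c"] by (simp add: algebra_simps)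
  qed
  define D where "D = (\<Sum>i\<in>{1..a}. \<Sum>j\<in>{1..b}. pvar (Suc (i + j)) * (Qf (int a - int i) * Qf (int b - int j)))"
  have left: "join_Q (Suc a) b = Qf (int a) * (\<Sum>j\<in>{1..b}. pvar (Suc j) * Qf (int b - int j)) + D"
    unfolding join_Q_def D_def
    by (simp only: sum_atLeast1_atMost_Suc) (simp add: sum_distrib_left algebra_simps)
  have right: "join_Q a (Suc b) = (\<Sum>i\<in>{1..a}. pvar (Suc i) * Qf (int a - int i)) * Qf (int b) + D"
    unfolding join_Q_def D_def
    by (simp only: sum_atLeast1_atMost_Suc) (simp add: sum_distrib_right sum_distrib_left sum.distrib algebra_simps)
  show ?thesis
    unfolding left right newton_Suc by (simp add: algebra_simps)
qed

definition raise_coeff :: "nat \<Rightarrow> nat \<Rightarrow> nat \<Rightarrow> F" where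
  "raise_coeff a b k = alpha * (of_int (int a - int b) + 2 * of_nat k)"

lemma join_Q_raising:
  "join_Q a b = - (const (alpha * of_nat b) * (Qf (int a) * Qf (int b)))
     + (\<Sum>k\<in>{1..b}. const (raise_coeff a b k) * (Qf (int a + int k) * Qf (int b - int k)))"
proof (induction b arbitrary: a)
  case 0
  show ?case
    by (simp add: join_Q_def)
next
  case (Suc b)
  have coeff_Suc: "raise_coeff a (Suc b) (Suc k) = raise_coeff (Suc a) b k" for k
    by (simp add: raise_coeff_def algebra_simps)
  have Q_Suc: "Qf (int a + int (Suc k)) * Qf (int (Suc b) - int (Suc k)) = Qf (int (Suc a) + int k) * Qf (int b - int k)" for k
    by (simp add: algebra_simps)
  have coeff_1: "const (raise_coeff a (Suc b) 1) = const (alpha * of_nat (Suc a)) - const (alpha * of_nat b)"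
    by (simp add: raise_coeff_def algebra_simps flip: const_diff)
  have "join_Q a (Suc b) = join_Q (Suc a) b - const (alpha * of_nat (Suc b)) * (Qf (int a) * Qf (int (Suc b)))
      + const (alpha * of_nat (Suc a)) * (Qf (int (Suc a)) * Qf (int b))"
    using join_Q_Suc_left[of a b] by (simp add: algebra_simps)
  also have "\<dots> = - (const (alpha * of_nat (Suc b)) * (Qf (int a) * Qf (int (Suc b))))
     + (const (raise_coeff a (Suc b) 1) * (Qf (int (Suc a)) * Qf (int b))
     + (\<Sum>k\<in>{1..b}. const (raise_coeff a (Suc b) (Suc k)) * (Qf (int a + int (Suc k)) * Qf (int (Suc b) - int (Suc k)))))"
    unfolding Suc.IH coeff_Suc Q_Suc coeff_1 by (simp add: algebra_simps)
  also have "\<dots> = - (const (alpha * of_nat (Suc b)) * (Qf (int a) * Qf (int (Suc b))))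
     + (\<Sum>k\<in>{1..Suc b}. const (raise_coeff a (Suc b) k) * (Qf (int a + int k) * Qf (int (Suc b) - int k)))"
    by (subst sum_atLeast1_atMost_Suc) (simp add: add.commute)
  finally show ?case .
qed

lemma qlist_Nil: "qlist [] = 1"
  by (simp add: qlist_def)

lemma qlist_Cons: "qlist (x # xs) = Qf x * qlist xs"
  by (simp add: qlist_def)

lemma join_form_Qf_qlist:
  assumes "a \<le> N" "\<forall>x\<in>set xs. x \<le> N"
  shows "join_form N (Qf (int a)) (qlist (map int xs)) =
    - (const (alpha * of_nat (sum_list xs)) * (Qf (int a) * qlist (map int xs)))
    + (\<Sum>t<length xs. \<Sum>k\<in>{1..xs ! t}.
        const (raise_coeff a (xs ! t) k) * (Qf (int a + int k) * qlist ((map int xs)[t := int (xs ! t) - int k])))"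
  using assms(2)
proof (induction xs)
  case Nil
  show ?case
    by (simp add: qlist_Nil)
next
  case (Cons b ys)
  let ?raise = "\<lambda>xs t. \<Sum>k\<in>{1..xs ! t}.
      const (raise_coeff a (xs ! t) k) * (Qf (int a + int k) * qlist ((map int xs)[t := int (xs ! t) - int k]))"
  have IH: "join_form N (Qf (int a)) (qlist (map int ys)) =
      - (const (alpha * of_nat (sum_list ys)) * (Qf (int a) * qlist (map int ys)))
      + (\<Sum>t<length ys. ?raise ys t)"
    using Cons by simp
  have "join_form N (Qf (int a)) (qlist (map int (b # ys)))
      = join_Q a b * qlist (map int ys) + Qf (int b) * join_form N (Qf (int a)) (qlist (map int ys))"
    using Cons.prems assms(1) by (simp add: qlist_Cons join_form_mult_right join_form_Qf)
  also have "\<dots> = - (const (alpha * of_nat (sum_list (b # ys))) * (Qf (int a) * qlist (map int (b # ys))))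
      + (?raise (b # ys) 0 + (\<Sum>t<length ys. ?raise (b # ys) (Suc t)))"
    unfolding IH join_Q_raising
    by (simp add: qlist_Cons const_add sum_distrib_left sum_distrib_right algebra_simps)
  also have "?raise (b # ys) 0 + (\<Sum>t<length ys. ?raise (b # ys) (Suc t)) = (\<Sum>t<length (b # ys). ?raise (b # ys) t)"
    by (simp only: length_Cons sum.lessThan_Suc_shift)
  finally show ?case .
qed

section \<open>Expansion of D on q_lambda\<close>

lemma Rop_1_Suc_Suc:
  "Rop (Suc 0) (Suc (Suc t)) k (a # rest) = Qf (int a + int k) * qlist ((map int rest)[t := int (rest ! t) - int k])"
  by (simp add: Rop_def qlist_Cons)

lemma Rop_Suc_Suc:
  assumes "i \<ge> 1" "j \<ge> 1"
  shows "Rop (Suc i) (Suc j) k (a # rest) = Qf (int a) * Rop i j k rest"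
  using assms by (cases i; cases j) (simp_all add: Rop_def qlist_Cons)

lemma e_lam_Cons:
  "e_lam (a # rest) = alpha ^ 2 * of_nat a ^ 2 - alpha * of_nat a + e_lam rest - 2 * alpha * of_nat (sum_list rest)"
proof -
  have "sum_list rest = (\<Sum>i<length rest. rest ! i)"
    by (simp add: sum_list_sum_nth atLeast0LessThan)
  then have "(\<Sum>i<length (a # rest). (i + 1) * (a # rest) ! i) = a + (\<Sum>i<length rest. (i + 1) * rest ! i) + sum_list rest"
    unfolding length_Cons sum.lessThan_Suc_shift by (simp add: sum.distrib)
  then show ?thesis
    unfolding e_lam_def by (simp add: algebra_simps)
qed

definition raising_sum :: "nat list \<Rightarrow> sym" where
  "raising_sum lam = (\<Sum>i\<in>{1..length lam}. \<Sum>j\<in>{i<..length lam}. \<Sum>k\<in>{1..lam ! (j - 1)}.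
     const (2 * alpha * (of_int (int (lam ! (i - 1)) - int (lam ! (j - 1))) + 2 * of_nat k)) * Rop i j k lam)"

lemma sum_greaterThanAtMost_Suc_shift: "(\<Sum>j\<in>{Suc i<..Suc n}. f j) = (\<Sum>j\<in>{i<..n}. f (Suc j))"
proof -
  have "{Suc i<..Suc n} = {Suc (Suc i)..Suc n}" "{i<..n} = {Suc i..n}"
    by auto
  then show ?thesis
    by (simp only: sum.shift_bounds_cl_Suc_ivl)
qed

lemma raising_sum_Cons:
  "raising_sum (a # rest) = (\<Sum>t<length rest. \<Sum>k\<in>{1..rest ! t}.
      const (2 * raise_coeff a (rest ! t) k) * (Qf (int a + int k) * qlist ((map int rest)[t := int (rest ! t) - int k])))
    + Qf (int a) * raising_sum rest"
proof -
  let ?l = "length rest"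
  let ?g = "\<lambda>i j. \<Sum>k\<in>{1..(a # rest) ! (j - 1)}.
    const (2 * alpha * (of_int (int ((a # rest) ! (i - 1)) - int ((a # rest) ! (j - 1))) + 2 * of_nat k))
    * Rop i j k (a # rest)"
  have "raising_sum (a # rest) = (\<Sum>j\<in>{1<..Suc ?l}. ?g 1 j) + (\<Sum>i\<in>{1..?l}. \<Sum>j\<in>{i<..?l}. ?g (Suc i) (Suc j))"
    unfolding raising_sum_def by (simp only: length_Cons sum_atLeast1_atMost_Suc sum_greaterThanAtMost_Suc_shift)
  also have "(\<Sum>j\<in>{1<..Suc ?l}. ?g 1 j) = (\<Sum>j\<in>{0<..?l}. ?g 1 (Suc j))"
    using sum_greaterThanAtMost_Suc_shift[where i = 0 and n = ?l and f = "?g 1"] by simp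
  also have "{0<..?l} = {Suc 0..?l}"
    by auto
  also have "(\<Sum>j\<in>{Suc 0..?l}. ?g 1 (Suc j)) = (\<Sum>t<?l. ?g 1 (Suc (Suc t)))"
    by (rule sum.atLeast1_atMost_eq)
  also have "\<dots> = (\<Sum>t<?l. \<Sum>k\<in>{1..rest ! t}.
      const (2 * raise_coeff a (rest ! t) k) * (Qf (int a + int k) * qlist ((map int rest)[t := int (rest ! t) - int k])))"
    by (intro sum.cong refl) (simp_all add: Rop_1_Suc_Suc raise_coeff_def mult.assoc)
  also have "(\<Sum>i\<in>{1..?l}. \<Sum>j\<in>{i<..?l}. ?g (Suc i) (Suc j)) = Qf (int a) * raising_sum rest"
    unfolding raising_sum_def sum_distrib_left
  proof (intro sum.cong refl)
    fix i j k assume "i \<in> {1..?l}" "j \<in> {i<..?l}"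
    then have "i \<ge> 1" "j \<ge> 1"
      by auto
    then show "const (2 * alpha * (of_int (int ((a # rest) ! (Suc i - 1)) - int ((a # rest) ! (Suc j - 1))) + 2 * of_nat k))
        * Rop (Suc i) (Suc j) k (a # rest) =
      Qf (int a) * (const (2 * alpha * (of_int (int (rest ! (i - 1)) - int (rest ! (j - 1))) + 2 * of_nat k)) * Rop i j k rest)"
      by (cases i; cases j) (simp_all add: Rop_Suc_Suc ac_simps)
  qed (auto simp: nth_Cons')
  finally show ?thesis
    by simp
qed

lemma Dtrunc_qlist:
  assumes "\<forall>x\<in>set lam. x \<le> N"
  shows "Dtrunc N (qlist (map int lam)) = const (e_lam lam) * qlist (map int lam) + raising_sum lam"
  using assms
proof (induction lam)
  case Nil
  show ?case
    by (simp add: qlist_Nil Dtrunc_1 e_lam_def raising_sum_def)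
next
  case (Cons a rest)
  then have "a \<le> N" and IH: "Dtrunc N (qlist (map int rest)) = const (e_lam rest) * qlist (map int rest) + raising_sum rest"
    and rest_le: "\<forall>x\<in>set rest. x \<le> N"
    by auto
  have "Dtrunc N (qlist (map int (a # rest))) = Dtrunc N (Qf (int a)) * qlist (map int rest)
      + Qf (int a) * Dtrunc N (qlist (map int rest)) + 2 * join_form N (Qf (int a)) (qlist (map int rest))"
    by (simp add: qlist_Cons Dtrunc_mult)
  also have "\<dots> = const (e_lam (a # rest)) * qlist (map int (a # rest)) + raising_sum (a # rest)"
    unfolding Dtrunc_Qf[OF \<open>a \<le> N\<close>] IH join_form_Qf_qlist[OF \<open>a \<le> N\<close> rest_le] raising_sum_Cons e_lam_Cons
    by (simp add: qlist_Cons const_diff const_add const_mult const_numeral sum_distrib_left algebra_simps)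
  finally show ?case .
qed

theorem corollary4p4:
  fixes lam :: "nat list"
  assumes "is_partition lam"
  shows "Dop (qlist (map int lam)) =
     const (e_lam lam) * qlist (map int lam)
   + (\<Sum>i\<in>{1..length lam}. \<Sum>j\<in>{i<..length lam}. \<Sum>k\<in>{1..lam ! (j - 1)}.
        const (2 * alpha * (of_int (int (lam ! (i - 1)) - int (lam ! (j - 1))) + 2 * of_nat k))
        * Rop i j k lam)"
proof -
  have parts_le: "\<forall>x\<in>set lam. x \<le> sum_list lam"
    using member_le_sum_list by blast
  then have "vars_le (sum_list lam) (qlist (map int lam))"
    by (intro vars_le_qlist) auto
  then have "Dop (qlist (map int lam)) = Dtrunc (sum_list lam) (qlist (map int lam))"
    by (rule Dop_eq_Dtrunc)
  also have "\<dots> = const (e_lam lam) * qlist (map int lam) + raising_sum lam"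
    using parts_le by (rule Dtrunc_qlist)
  finally show ?thesis
    unfolding raising_sum_def .
qed

end
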